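(* Fix an archive level $K\ge 0$ and consider the period equilibria of the two environments $e\in\{\mathrm{HO},\mathrm{AI}\}$ at $K$, with posted flows $q_L^e(K),q_H^e(K)$ satisfying $Q^e(K)=\pi q_L^e(K)+(1-\pi)q_H^e(K)>0$ and $q_L^e(K)>0$. Then the expected knowledge increment satisfies $$\bar\Delta^e(K)=\Delta\cdot\frac{(1-\pi)\,q_H^{e}(K)}{\pi\,q_L^{e}(K)+(1-\pi)\,q_H^{e}(K)},$$ which is increasing in the ratio $q_H^e(K)/q_L^e(K)$. Therefore $c^{*,\mathrm{AI}}(K)\ge c^{*,\mathrm{HO}}(K)$ if and only if $$\frac{q_H^{\mathrm{AI}}(K)}{q_L^{\mathrm{AI}}(K)}\ge \frac{q_H^{\mathrm{HO}}(K)}{q_L^{\mathrm{HO}}(K)}.$$ Moreover, holding escalation probabilities fixed across environments ($m_\theta^{\mathrm{AI}}(K)=m_\theta^{\mathrm{HO}}(K)$ for both $\theta\in\{L,H\}$), a sufficient condition for the posted pool to be more $H$-rich under AI (i.e. for the displayed ratio inequality to hold) is $$\frac{1-a_H^{\mathrm{AI}}(K)}{1-a_H^{\mathrm{HO}}(K)}>\frac{1-a_L^{\mathrm{AI}}(K)}{1-a_L^{\mathrm{HO}}(K)}.$$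
   Context: Model: routine-task share $\pi\in(0,1)$; query types $\theta\in\{L,H\}$ (routine and knowledge-enhancing); environments $e\in\{\mathrm{HO},\mathrm{AI}\}$ (human-only and AI). Parameters $\Delta>0$ (knowledge increment from a resolved type-$H$ query), $\beta\ge 0$, $u\ge 0$. For each $e$ and $K$: private-resolution probabilities $a_\theta^e(K)\in[0,1)$; a posting-cost CDF $\Gamma_\theta$ on $[0,\infty)$; private values $V_\theta>0$; an answering-cost CDF $F$ on $[0,\bar c]$; a cost shifter $C(K)$. In a period equilibrium at $(K,e)$ the following hold: match probability $\mu^e=\min\{1,\Psi(\alpha^{*,e})/Q^e\}$ where $\Psi(\alpha^{*,e})$ is the mass of participating contributors; expected increment $\bar\Delta^e=(1-\pi)q_H^e\Delta/Q^e$; answering cutoff $c^{*,e}(K)=\max\{0,\beta\bar\Delta^e(K)+u-C(K)\}$; resolution probability $\sigma^e=\mu^eF(c^{*,e})$; escalation probabilities $m_\theta^e=\Gamma_\theta(\sigma^eV_\theta)$; posted flows $q_\theta^e(K)=m_\theta^e(K)[1-a_\theta^e(K)]$ and total flow $Q^e=\pi q_L^e+(1-\pi)q_H^e$.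
   Formalization: The equivalence between $c^{*,\mathrm{AI}}(K)\ge c^{*,\mathrm{HO}}(K)$ and the ratio inequality holds only when $\beta>0$ and $c^{*,\mathrm{HO}}(K)>0$; without these, only the ratio inequality implies $c^{*,\mathrm{AI}}(K)\ge c^{*,\mathrm{HO}}(K)$. Apart from conventions, each condition added here is assumed in the paper as well or is needed for the statement above to hold. *)

theory Defs
  imports Complex_Main
begin

datatype env = HO | AI
datatype qtype = L | H

definition cdf_on :: "real \<Rightarrow> real \<Rightarrow> (real \<Rightarrow> real) \<Rightarrow> bool" where
  "cdf_on lo hi G \<longleftrightarrow> mono G \<and> (\<forall>x. 0 \<le> G x \<and> G x \<le> 1)
      \<and> (\<forall>x. x < lo \<longrightarrow> G x = 0) \<and> (\<forall>x. hi \<le> x \<longrightarrow> G x = 1)"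

definition cdf_nonneg :: "(real \<Rightarrow> real) \<Rightarrow> bool" where
  "cdf_nonneg G \<longleftrightarrow> mono G \<and> (\<forall>x. 0 \<le> G x \<and> G x \<le> 1) \<and> (\<forall>x. x < 0 \<longrightarrow> G x = 0)"

text \<open>Primitives: routine share rs, increment Delta,
  beta, u, private-resolution probabilities a e theta K, posting-cost CDFs Gam theta,
  private values V theta, answering-cost CDF F, cost shifter C, and the mass of
  participating contributors Psi (= Psi(alpha^{*,e}) at K).
  Equilibrium objects: match probability mu, expected increment Db, cutoff c,
  resolution probability sigma, escalation probabilities m, posted flows q, total flow Q.\<close>
definition period_eq ::
  "real \<Rightarrow> real \<Rightarrow> real \<Rightarrow> real \<Rightarrow> (env \<Rightarrow> qtype \<Rightarrow> real \<Rightarrow> real) \<Rightarrow>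
   (qtype \<Rightarrow> real \<Rightarrow> real) \<Rightarrow> (qtype \<Rightarrow> real) \<Rightarrow> (real \<Rightarrow> real) \<Rightarrow> (real \<Rightarrow> real) \<Rightarrow>
   real \<Rightarrow> real \<Rightarrow> env \<Rightarrow>
   real \<Rightarrow> real \<Rightarrow> real \<Rightarrow> real \<Rightarrow> (qtype \<Rightarrow> real) \<Rightarrow> (qtype \<Rightarrow> real) \<Rightarrow> real \<Rightarrow> bool" where
  "period_eq rs Delta beta u a Gam V F C Psi K e mu Db c sigma m q Q \<longleftrightarrow>
     Q = rs * q L + (1 - rs) * q H \<and>
     mu = min 1 (Psi / Q) \<and>
     Db = (1 - rs) * q H * Delta / Q \<and>
     c = max 0 (beta * Db + u - C K) \<and>
     sigma = mu * F c \<and>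
     (\<forall>\<theta>. m \<theta> = Gam \<theta> (sigma * V \<theta>)) \<and>
     (\<forall>\<theta>. q \<theta> = m \<theta> * (1 - a e \<theta> K))"

definition dbar_of_ratio :: "real \<Rightarrow> real \<Rightarrow> real \<Rightarrow> real" where
  "dbar_of_ratio rs Delta r = Delta * ((1 - rs) * r / (rs + (1 - rs) * r))"

end

theory Submission
  imports Defs
begin

text \<open>The expected increment depends on the posted pool only through the ratio
  \<open>r = q\<^sub>H / q\<^sub>L\<close>, via the linear-fractional map \<open>r \<mapsto> \<Delta> (1-\<pi>) r / (\<pi> + (1-\<pi>) r)\<close>,
  which is strictly increasing on \<open>r \<ge> 0\<close>. The cutoff \<open>max 0 (\<beta> \<Delta>bar + u - C)\<close> is
  nondecreasing in \<open>\<Delta>bar\<close>, and strictly increasing where it is positive and \<open>\<beta> > 0\<close>,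
  so comparing cutoffs across environments amounts to comparing ratios. With common
  escalation probabilities, \<open>q\<^sub>H / q\<^sub>L\<close> is \<open>m\<^sub>H / m\<^sub>L\<close> times the ratio of the survival
  probabilities \<open>1 - a\<^sub>\<theta>\<close>, and the hypothesis on these is a cross-multiplied comparison
  of exactly those ratios.\<close>

lemma dbar_of_ratio_eq:
  fixes qL qH :: real
  assumes "0 < qL"
  shows "dbar_of_ratio rs Delta (qH / qL)
           = Delta * ((1 - rs) * qH / (rs * qL + (1 - rs) * qH))"
proof -
  have "rs + (1 - rs) * (qH / qL) = (rs * qL + (1 - rs) * qH) / qL"
    using assms by (simp add: field_simps)
  then show ?thesis
    using assms by (simp add: dbar_of_ratio_def)
qed

lemma strict_mono_on_dbar_of_ratio:
  assumes "0 < rs" "rs < 1" "0 < Delta"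
  shows "strict_mono_on {0..} (dbar_of_ratio rs Delta)"
proof (rule strict_mono_onI)
  fix r s :: real
  assume "r \<in> {0..}" "s \<in> {0..}" "r < s"
  then have r: "0 \<le> r" and s: "0 \<le> s" and "r < s" by auto
  have denom_r: "0 < rs + (1 - rs) * r" and denom_s: "0 < rs + (1 - rs) * s"
    using assms r s by (simp_all add: add_pos_nonneg)
  have "(1 - rs) * r * (rs + (1 - rs) * s) - (1 - rs) * s * (rs + (1 - rs) * r)
          = (1 - rs) * rs * (r - s)"
    by (simp add: algebra_simps)
  also have "\<dots> < 0"
    using assms \<open>r < s\<close> by (simp add: mult_pos_neg)
  finally have "(1 - rs) * r / (rs + (1 - rs) * r) < (1 - rs) * s / (rs + (1 - rs) * s)"
    using denom_r denom_s by (simp add: divide_simps)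
  then show "dbar_of_ratio rs Delta r < dbar_of_ratio rs Delta s"
    unfolding dbar_of_ratio_def using assms(3) by (rule mult_strict_left_mono)
qed

lemma cutoff_mono:
  fixes beta x y w :: real
  assumes "0 \<le> beta" "x \<le> y"
  shows "max 0 (beta * x + w) \<le> max 0 (beta * y + w)"
  using assms by (simp add: mult_left_mono max.coboundedI2)

lemma cutoff_le_iff:
  fixes beta x y w :: real
  assumes "0 < beta" "0 < max 0 (beta * x + w)"
  shows "max 0 (beta * x + w) \<le> max 0 (beta * y + w) \<longleftrightarrow> x \<le> y"
proof
  assume "max 0 (beta * x + w) \<le> max 0 (beta * y + w)"
  with assms(2) have "beta * x \<le> beta * y"
    by (simp add: max_def split: if_splits)
  with assms(1) show "x \<le> y" by simp
qed (use assms cutoff_mono in auto)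

lemma posted_ratio_le:
  fixes mH mL xH xL yH yL :: real
  assumes "0 \<le> mH" "0 \<le> mL" "0 < xL" "0 < yH" "0 < yL"
    and "xL / yL < xH / yH"
  shows "mH * yH / (mL * yL) \<le> mH * xH / (mL * xL)"
proof -
  have "xL * yH < xH * yL"
    using assms(3-6) by (simp add: divide_simps)
  then have "yH / yL \<le> xH / xL"
    using assms(3,5) by (simp add: divide_simps mult.commute)
  then have "mH / mL * (yH / yL) \<le> mH / mL * (xH / xL)"
    by (rule mult_left_mono) (use assms(1,2) in simp)
  then show ?thesis by (simp only: times_divide_times_eq)
qed

theorem lemma1:
  fixes rs Delta beta u cbar K :: real
    and a :: "env \<Rightarrow> qtype \<Rightarrow> real \<Rightarrow> real"
    and Gam :: "qtype \<Rightarrow> real \<Rightarrow> real" and V :: "qtype \<Rightarrow> real"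
    and F C :: "real \<Rightarrow> real" and Psi :: "env \<Rightarrow> real"
    and mu Db c sigma Q :: "env \<Rightarrow> real" and m q :: "env \<Rightarrow> qtype \<Rightarrow> real"
  assumes rs: "0 < rs" "rs < 1"
    and Delta: "Delta > 0" and beta: "beta \<ge> 0" and u: "u \<ge> 0"
    and a_rng: "\<And>e \<theta> k. 0 \<le> a e \<theta> k \<and> a e \<theta> k < 1"
    and Gam: "\<And>\<theta>. cdf_nonneg (Gam \<theta>)"
    and V: "\<And>\<theta>. V \<theta> > 0"
    and cbar: "cbar \<ge> 0" and F: "cdf_on 0 cbar F"
    and Psi: "\<And>e. Psi e \<ge> 0"
    and K: "K \<ge> 0"
    and eq: "\<And>e. period_eq rs Delta beta u a Gam V F C (Psi e) K e
                    (mu e) (Db e) (c e) (sigma e) (m e) (q e) (Q e)"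
    and Qpos: "\<And>e. Q e > 0"
    and qLpos: "\<And>e. q e L > 0"
  shows "(\<forall>e. Db e = Delta * ((1 - rs) * q e H / (rs * q e L + (1 - rs) * q e H)))
       \<and> (\<forall>e. Db e = dbar_of_ratio rs Delta (q e H / q e L))
       \<and> strict_mono_on {0..} (dbar_of_ratio rs Delta)
       \<and> (q AI H / q AI L \<ge> q HO H / q HO L \<longrightarrow> c AI \<ge> c HO)
       \<and> (beta > 0 \<and> c HO > 0 \<longrightarrow>
             (c AI \<ge> c HO \<longleftrightarrow> q AI H / q AI L \<ge> q HO H / q HO L))
       \<and> ((\<forall>\<theta>. m AI \<theta> = m HO \<theta>) \<and>
           (1 - a AI H K) / (1 - a HO H K) > (1 - a AI L K) / (1 - a HO L K)
           \<longrightarrow> q AI H / q AI L \<ge> q HO H / q HO L)"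
proof -
  have q: "q e \<theta> = m e \<theta> * (1 - a e \<theta> K)"
    and m: "m e \<theta> = Gam \<theta> (sigma e * V \<theta>)"
    and c_def: "c e = max 0 (beta * Db e + u - C K)"
    and Db: "Db e = (1 - rs) * q e H * Delta / Q e"
    and Q: "Q e = rs * q e L + (1 - rs) * q e H"
    for e \<theta>
    using eq[of e] unfolding period_eq_def by blast+
  have c: "c e = max 0 (beta * Db e + (u - C K))" for e
    by (simp add: c_def add_diff_eq)
  have m_nonneg: "0 \<le> m e \<theta>" for e \<theta>
    using Gam[of \<theta>] by (simp add: m cdf_nonneg_def)
  have Db_closed: "Db e = Delta * ((1 - rs) * q e H / (rs * q e L + (1 - rs) * q e H))" for e
    by (simp add: Db Q)
  have Db_ratio: "Db e = dbar_of_ratio rs Delta (q e H / q e L)" for e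
    using Db_closed dbar_of_ratio_eq[OF qLpos] by simp
  have ratio_nonneg: "0 \<le> q e H / q e L" for e
    using q[of e H] m_nonneg[of e H] a_rng[of e H K] qLpos[of e] by simp
  have mono: "strict_mono_on {0..} (dbar_of_ratio rs Delta)"
    using rs Delta by (rule strict_mono_on_dbar_of_ratio)
  have Db_le_iff: "Db HO \<le> Db AI \<longleftrightarrow> q HO H / q HO L \<le> q AI H / q AI L"
    using strict_mono_on_less_eq[OF mono] ratio_nonneg by (simp add: Db_ratio)
  have "c HO \<le> c AI" if "q HO H / q HO L \<le> q AI H / q AI L"
    using cutoff_mono[OF beta] that Db_le_iff by (simp add: c)
  moreover have "c HO \<le> c AI \<longleftrightarrow> q HO H / q HO L \<le> q AI H / q AI L"
    if "0 < beta" "0 < c HO"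
    using cutoff_le_iff[of beta "Db HO"] that Db_le_iff by (simp add: c)
  moreover have "q HO H / q HO L \<le> q AI H / q AI L"
    if "\<forall>\<theta>. m AI \<theta> = m HO \<theta>"
      and "(1 - a AI L K) / (1 - a HO L K) < (1 - a AI H K) / (1 - a HO H K)"
    using posted_ratio_le[OF m_nonneg m_nonneg _ _ _ that(2)] that(1) a_rng
    by (simp add: q)
  ultimately show ?thesis
    using Db_closed Db_ratio mono by blast
qed

end
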